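(* Let $\alpha\in(0,1)$, $p\in(0,1)$, $\bar p=1-p$, and let $b_p$ denote the Bernoulli distribution $p\delta_1+\bar p\delta_0$. Let $B_{1,1-\alpha}\sim\mathrm{Beta}(1,1-\alpha)$, and let $W$ be a Bernoulli$(p)$ random variable independent of $B_{1,1-\alpha}$ and of $M_{\alpha,1}(b_p)$, with $M_{\alpha,1-\alpha}(b_p)\stackrel{d}{=}B_{1,1-\alpha}M_{\alpha,1}(b_p)+(1-B_{1,1-\alpha})W$. Then conditionally on $W=1$, $M_{\alpha,1-\alpha}(b_p)\stackrel{d}{=}1-B_{1,1-\alpha}M_{\alpha,1}(b_{\bar p})$ (with $B_{1,1-\alpha}$ and $M_{\alpha,1}(b_{\bar p})$ independent), and conditionally on $W=0$, $M_{\alpha,1-\alpha}(b_p)\stackrel{d}{=}B_{1,1-\alpha}M_{\alpha,1}(b_p)$. Equivalently, a density function of $M_{\alpha,1-\alpha}(b_p)$ is $$f_{\alpha,1-\alpha,p}(t)=(1-\alpha)\int_0^1\Big[\bar p\,f_{\alpha,1,p}\Big(\frac tu\Big)+p\,f_{\alpha,1,\bar p}\Big(\frac{1-t}{u}\Big)\Big]u^{-1}(1-u)^{-\alpha}\,du.$$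
   Context: $\tilde P_{\alpha,\theta}=\sum_kW_k\delta_{Z_k}$ with $V_k$ independent $\mathrm{Beta}(1-\alpha,\theta+k\alpha)$, $W_1=V_1$, $W_k=V_k\prod_{j<k}(1-V_j)$, $Z_k$ i.i.d. $\eta$ independent of $(V_k)$; $M_{\alpha,\theta}(\eta)=\int x\,\tilde P_{\alpha,\theta}(dx)$. For $q\in(0,1)$, $f_{\alpha,1,q}$ denotes a density of $M_{\alpha,1}(b_q)$ on $(0,1)$, extended by $0$ outside $(0,1)$. *)

theory Defs
  imports "HOL-Probability.Probability"
begin

definition beta_density :: "real \<Rightarrow> real \<Rightarrow> real \<Rightarrow> ennreal" where
  "beta_density a b x =
     (if 0 < x \<and> x < 1 then ennreal (x powr (a - 1) * (1 - x) powr (b - 1) / Beta a b) else 0)"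

definition beta_measure :: "real \<Rightarrow> real \<Rightarrow> real measure" where
  "beta_measure a b = density lborel (beta_density a b)"

definition bern :: "real \<Rightarrow> real measure" where
  "bern p = measure_pmf (map_pmf (\<lambda>b. if b then 1 else 0) (bernoulli_pmf p))"

text \<open>Stick-breaking weights: index k :: nat corresponds to the paper's k+1.
  W_k = V_k * prod_{j<k} (1 - V_j).\<close>
definition stick_weight :: "(nat \<Rightarrow> real) \<Rightarrow> nat \<Rightarrow> real" where
  "stick_weight V k = V k * (\<Prod>j<k. 1 - V j)"

text \<open>Law of M_{alpha,theta}(eta) = sum_k W_k Z_k, with (V_k) independent,
  V_k ~ Beta(1-alpha, theta + k alpha) (paper's indexing k >= 1), Z_k iid eta,
  independent of (V_k).\<close>
definition PY_mean_law :: "real \<Rightarrow> real \<Rightarrow> real measure \<Rightarrow> real measure" where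
  "PY_mean_law \<alpha> \<theta> \<eta> =
     distr (\<Pi>\<^sub>M k\<in>(UNIV::nat set). beta_measure (1 - \<alpha>) (\<theta> + real (Suc k) * \<alpha>) \<Otimes>\<^sub>M \<eta>)
           borel
           (\<lambda>\<omega>. \<Sum>k. stick_weight (\<lambda>j. fst (\<omega> j)) k * snd (\<omega> k))"

end

theory Submission
  imports Defs
begin

text \<open>
  Let B, M and W be independent with laws Beta(1, 1 - \<alpha>), M_{\<alpha>,1}(b_p) and b_p, and put
  Y = B M + (1 - B) W. Conditioning on W merely freezes the last coordinate: given W = 0, Y is B M,
  and given W = 1 it is B M + 1 - B = 1 - B (1 - M). The key input is the reflection symmetry
  1 - M_{\<alpha>,\<theta>}(b_p) = M_{\<alpha>,\<theta>}(b_{1-p}) in law. Replacing every atom Z_k of the stick-breaking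
  representation by 1 - Z_k maps one representation to the other, and it maps the mean
  \<Sum>_k W_k Z_k to 1 - \<Sum>_k W_k Z_k because the weights sum to 1 almost surely: the remainder
  \<Prod>_{j<n} (1 - V_j) is decreasing with expectation \<Prod>_{j<n} (1 - (1 - \<alpha>) / (1 + \<theta> + j \<alpha>)), which
  tends to 0 because the harmonic series diverges. The density formula then follows from the assumed
  identity in law, the density t \<mapsto> \<integral> f(t / u) / u dB(u) of a product B M, and mixing over W.
\<close>

lemma Beta_pos: "0 < a \<Longrightarrow> 0 < b \<Longrightarrow> 0 < Beta a (b::real)"
  unfolding Beta_def by (simp add: Gamma_real_pos)

lemma Beta_1_left: "0 < b \<Longrightarrow> Beta 1 b = 1 / (b::real)"
proof -
  assume "0 < b"
  moreover have "Gamma (b + 1) = b * Gamma b"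
    using \<open>0 < b\<close> by (intro Gamma_plus1) (auto elim!: nonpos_Ints_cases)
  moreover have "Gamma b \<noteq> 0"
    using Gamma_real_pos[OF \<open>0 < b\<close>] by simp
  ultimately show ?thesis by (simp add: Beta_def add.commute)
qed

lemma nn_integral_Beta_kernel:
  assumes "0 < a" "0 < b"
  shows "(\<integral>\<^sup>+x. indicator {0<..<1} x * ennreal (x powr (a - 1) * (1 - x) powr (b - 1)) \<partial>lborel)
         = ennreal (Beta a b)"
proof -
  have "AE x in lborel. x \<noteq> 0" "AE x in lborel. x \<noteq> 1"
    by (rule AE_lborel_singleton)+
  then have "(\<integral>\<^sup>+x. indicator {0<..<1} x * ennreal (x powr (a - 1) * (1 - x) powr (b - 1)) \<partial>lborel)
      = (\<integral>\<^sup>+x. ennreal (x powr (a - 1) * (1 - x) powr (b - 1)) * indicator {0..1} x \<partial>lborel)"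
    by (intro nn_integral_cong_AE) (auto simp: indicator_def)
  also have "\<dots> = ennreal (Beta a b)"
    by (rule nn_integral_has_integral_lebesgue'[OF _ has_integral_Beta_real[OF assms]]) auto
  finally show ?thesis .
qed

lemma beta_density_eq:
  "0 < a \<Longrightarrow> 0 < b \<Longrightarrow> beta_density a b x =
     indicator {0<..<1} x * ennreal (x powr (a - 1) * (1 - x) powr (b - 1)) / ennreal (Beta a b)"
  using Beta_pos[of a b] by (auto simp: beta_density_def indicator_def divide_ennreal)

lemma beta_density_1_left:
  "0 < b \<Longrightarrow> beta_density 1 b u = indicator {0<..<1} u * ennreal (b * (1 - u) powr (b - 1))"
  by (auto simp: beta_density_def Beta_1_left indicator_def mult.commute)

lemma borel_measurable_beta_density[measurable]: "beta_density a b \<in> borel_measurable borel"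
  unfolding beta_density_def by measurable

lemma sets_beta_measure[simp, measurable_cong]: "sets (beta_measure a b) = sets borel"
  by (simp add: beta_measure_def)

lemma space_beta_measure[simp]: "space (beta_measure a b) = UNIV"
  by (simp add: beta_measure_def)

lemma nn_integral_beta_measure:
  assumes "0 < a" "0 < b" "f \<in> borel_measurable borel"
  shows "(\<integral>\<^sup>+x. f x \<partial>beta_measure a b) =
    (\<integral>\<^sup>+x. indicator {0<..<1} x * ennreal (x powr (a - 1) * (1 - x) powr (b - 1)) * f x \<partial>lborel)
      / ennreal (Beta a b)"
  using assms unfolding beta_measure_def
  by (simp add: nn_integral_density beta_density_eq ennreal_times_divide mult_ac
        flip: nn_integral_divide)

lemma prob_space_beta_measure:
  assumes "0 < a" "0 < b"
  shows "prob_space (beta_measure a b)"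
proof
  have "emeasure (beta_measure a b) (space (beta_measure a b)) = (\<integral>\<^sup>+x. 1 \<partial>beta_measure a b)"
    by simp
  also have "\<dots> = ennreal (Beta a b) / ennreal (Beta a b)"
    using assms by (subst nn_integral_beta_measure) (simp_all add: nn_integral_Beta_kernel)
  finally
  show "emeasure (beta_measure a b) (space (beta_measure a b)) = 1"
    using Beta_pos[OF assms] by (simp add: divide_ennreal)
qed

lemma nn_integral_beta_measure_compl:
  assumes "0 < a" "0 < b"
  shows "(\<integral>\<^sup>+x. ennreal (1 - x) \<partial>beta_measure a b) = ennreal (b / (a + b))"
proof -
  have "(\<integral>\<^sup>+x. ennreal (1 - x) \<partial>beta_measure a b) =
     (\<integral>\<^sup>+x. indicator {0<..<1} x * ennreal (x powr (a - 1) * (1 - x) powr ((b + 1) - 1)) \<partial>lborel)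
       / ennreal (Beta a b)"
    using assms
    by (simp add: nn_integral_beta_measure, intro arg_cong2[where f="(/)"] nn_integral_cong)
       (auto simp: indicator_def powr_mult_base ennreal_mult'[symmetric] mult_ac)
  also have "\<dots> = ennreal (Beta a (b + 1)) / ennreal (Beta a b)"
    using assms nn_integral_Beta_kernel[of a "b + 1"] by simp
  also have "\<dots> = ennreal (Beta a (b + 1) / Beta a b)"
    using assms Beta_pos[OF assms] Beta_pos[of a "b + 1"] by (simp add: divide_ennreal)
  also have "Beta a (b + 1) / Beta a b = b / (a + b)"
  proof -
    have "(a + b) * Beta a (b + 1) = b * Beta a b"
      using assms by (intro Beta_plus1_right) (auto elim!: nonpos_Ints_cases)
    then show ?thesis using assms Beta_pos[OF assms] by (simp add: field_simps)
  qed
  finally show ?thesis .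
qed

lemma AE_beta_measure: "AE x in beta_measure a b. 0 < x \<and> x < 1"
  unfolding beta_measure_def
  by (subst AE_density) (auto simp: beta_density_def intro!: AE_I2)

lemma sets_bern[simp]: "sets (bern q) = UNIV"
  and sets_bern_count_space[measurable_cong]: "sets (bern q) = sets (count_space UNIV)"
  and space_bern[simp]: "space (bern q) = UNIV"
  by (simp_all add: bern_def)

lemma prob_space_bern: "prob_space (bern q)"
  by (simp add: bern_def prob_space_measure_pmf)

lemma nn_integral_bern:
  "0 \<le> q \<Longrightarrow> q \<le> 1 \<Longrightarrow> (\<integral>\<^sup>+z. f z \<partial>bern q) = ennreal q * f 1 + ennreal (1 - q) * f 0"
  by (simp add: bern_def mult.commute)

definition bern_pmf :: "real \<Rightarrow> real pmf" where
  "bern_pmf q = map_pmf (\<lambda>b. if b then 1 else 0) (bernoulli_pmf q)"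

lemma bern_eq_bern_pmf: "bern q = measure_pmf (bern_pmf q)"
  by (simp add: bern_def bern_pmf_def)

lemma set_bern_pmf: "set_pmf (bern_pmf q) \<subseteq> {0..1}"
  by (auto simp: bern_pmf_def)

lemma map_bern_pmf_compl:
  assumes "0 \<le> q" "q \<le> 1"
  shows "map_pmf (\<lambda>z. 1 - z) (bern_pmf q) = bern_pmf (1 - q)"
proof -
  have "bernoulli_pmf (1 - q) = map_pmf Not (bernoulli_pmf q)"
  proof (rule pmf_eqI)
    fix b
    have "pmf (map_pmf Not (bernoulli_pmf q)) (Not (Not b)) = pmf (bernoulli_pmf q) (Not b)"
      by (rule pmf_map_inj') (auto intro: injI)
    then show "pmf (bernoulli_pmf (1 - q)) b = pmf (map_pmf Not (bernoulli_pmf q)) b"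
      using assms by (cases b) auto
  qed
  then show ?thesis
    unfolding bern_pmf_def by (simp add: map_pmf_comp) (intro map_pmf_cong; auto)
qed

section \<open>The reflection symmetry of the stick-breaking mean\<close>

lemma prod_tendsto_zero_harmonic:
  fixes x :: "nat \<Rightarrow> real"
  assumes c: "0 < c" and x: "\<And>j. 0 \<le> x j" "\<And>j. x j \<le> 1 - c / real (Suc j)"
  shows "(\<lambda>n. \<Prod>j<n. x j) \<longlonglongrightarrow> 0"
proof (rule tendsto_sandwich[where f="\<lambda>_. 0" and h="\<lambda>n. exp (- (c * harm n))"])
  have "x j \<le> exp (- (c / real (Suc j)))" for j
    using x(2)[of j] exp_ge_add_one_self[of "- (c / real (Suc j))"] by linarith
  then have "(\<Prod>j<n. x j) \<le> (\<Prod>j<n. exp (- (c / real (Suc j))))" for n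
    by (intro prod_mono) (simp add: x(1))
  also have "(\<Prod>j<n. exp (- (c / real (Suc j)))) = exp (- (c * harm n))" for n
    by (simp add: exp_sum[symmetric] harm_altdef sum_negf sum_distrib_left divide_inverse)
  finally show "eventually (\<lambda>n. (\<Prod>j<n. x j) \<le> exp (- (c * harm n))) sequentially"
    by simp
  have "filterlim (\<lambda>n. c * harm n) at_top sequentially"
    using c by (intro filterlim_tendsto_pos_mult_at_top[OF tendsto_const _ harm_at_top])
  then show "(\<lambda>n. exp (- (c * harm n))) \<longlonglongrightarrow> 0"
    by (intro filterlim_compose[OF exp_at_bot]) (simp add: filterlim_uminus_at_top)
qed (simp_all add: prod_nonneg x(1))

lemma AE_tendsto_zero_decseq:
  fixes G :: "nat \<Rightarrow> 'a \<Rightarrow> ennreal"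
  assumes [measurable]: "\<And>n. G n \<in> borel_measurable M"
    and dec: "AE x in M. decseq (\<lambda>n. G n x)"
    and lim: "(\<lambda>n. \<integral>\<^sup>+x. G n x \<partial>M) \<longlonglongrightarrow> 0"
  shows "AE x in M. (\<lambda>n. G n x) \<longlonglongrightarrow> 0"
proof -
  have "(\<integral>\<^sup>+x. (INF n. G n x) \<partial>M) \<le> (\<integral>\<^sup>+x. G n x \<partial>M)" for n
    by (intro nn_integral_mono INF_lower) simp
  then have "(\<integral>\<^sup>+x. (INF n. G n x) \<partial>M) \<le> 0"
    by (intro LIMSEQ_le_const[OF lim]) auto
  then have "AE x in M. (INF n. G n x) = 0"
    by (simp add: nn_integral_0_iff_AE)
  with dec show ?thesis
    by eventually_elim (metis LIMSEQ_INF)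
qed

lemma sets_PY_mean_law[simp, measurable_cong]: "sets (PY_mean_law \<alpha> \<theta> \<eta>) = sets borel"
  by (simp add: PY_mean_law_def)

definition stick_sum :: "(nat \<Rightarrow> real \<times> real) \<Rightarrow> real" where
  "stick_sum \<omega> = (\<Sum>k. stick_weight (\<lambda>j. fst (\<omega> j)) k * snd (\<omega> k))"

lemma sum_stick_weight: "(\<Sum>k<n. stick_weight V k) = 1 - (\<Prod>j<n. 1 - V j)"
  by (induction n) (auto simp: stick_weight_def algebra_simps)

locale stick_breaking =
  fixes \<alpha> \<theta> :: real
  assumes discount: "0 < \<alpha>" "\<alpha> < 1" and concentration: "- \<alpha> < \<theta>"
begin

lemma beta_parameter_pos: "0 < \<theta> + real (Suc k) * \<alpha>"
proof -
  have "0 \<le> real k * \<alpha>" using discount by simp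
  then show ?thesis using concentration by (simp add: algebra_simps)
qed

definition stick_factor :: "real pmf \<Rightarrow> nat \<Rightarrow> (real \<times> real) measure" where
  "stick_factor P k = beta_measure (1 - \<alpha>) (\<theta> + real (Suc k) * \<alpha>) \<Otimes>\<^sub>M measure_pmf P"

definition stick_space :: "real pmf \<Rightarrow> (nat \<Rightarrow> real \<times> real) measure" where
  "stick_space P = (\<Pi>\<^sub>M k\<in>UNIV. stick_factor P k)"

text \<open>The mean of 1 - V_j for V_j \<sim> Beta(1 - \<alpha>, \<theta> + (j + 1) \<alpha>).\<close>

definition stick_compl_mean :: "nat \<Rightarrow> real" where
  "stick_compl_mean j = (\<theta> + real (Suc j) * \<alpha>) / (1 - \<alpha> + (\<theta> + real (Suc j) * \<alpha>))"

lemma PY_mean_law_pmf: "PY_mean_law \<alpha> \<theta> (measure_pmf P) = distr (stick_space P) borel stick_sum"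
  by (simp add: PY_mean_law_def stick_space_def stick_factor_def stick_sum_def[abs_def])

lemma sets_stick_factor[measurable_cong]:
  "sets (stick_factor P k) = sets (borel \<Otimes>\<^sub>M count_space UNIV)"
  unfolding stick_factor_def by (intro sets_pair_measure_cong) auto

lemma space_stick_factor[simp]: "space (stick_factor P k) = UNIV"
  by (simp add: stick_factor_def space_pair_measure)

lemma prob_space_stick_factor: "prob_space (stick_factor P k)"
  unfolding stick_factor_def using discount beta_parameter_pos
  by (intro prob_space_pair prob_space_beta_measure prob_space_measure_pmf) auto

lemma product_prob_space_stick_factor: "product_prob_space (stick_factor P)"
  by (simp add: product_prob_space_def product_prob_space_axioms_def product_sigma_finite_def
      prob_space_stick_factor prob_space_imp_sigma_finite)

lemma prob_space_stick_space: "prob_space (stick_space P)"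
  unfolding stick_space_def by (intro prob_space_PiM prob_space_stick_factor)

lemma measurable_stick_component:
  "(\<lambda>\<omega>. \<omega> k) \<in> measurable (stick_space P) (stick_factor P k)"
  unfolding stick_space_def by (rule measurable_component_singleton) simp

lemma measurable_stick_coordinate:
  "(\<lambda>\<omega>. \<omega> k) \<in> measurable (stick_space P) (borel \<Otimes>\<^sub>M count_space UNIV)"
  using measurable_stick_component by (simp cong: measurable_cong_sets add: sets_stick_factor)

lemma borel_measurable_stick_coordinates[measurable]:
  "(\<lambda>\<omega>. fst (\<omega> k)) \<in> borel_measurable (stick_space P)"
  "(\<lambda>\<omega>. snd (\<omega> k)) \<in> borel_measurable (stick_space P)"
proof -
  show "(\<lambda>\<omega>. fst (\<omega> k)) \<in> borel_measurable (stick_space P)"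
    by (rule measurable_compose[OF measurable_stick_coordinate measurable_fst])
  have "(\<lambda>x. snd x) \<in> borel_measurable (borel \<Otimes>\<^sub>M count_space (UNIV :: real set))"
    by (rule measurable_compose[OF measurable_snd]) simp
  then show "(\<lambda>\<omega>. snd (\<omega> k)) \<in> borel_measurable (stick_space P)"
    by (rule measurable_compose[OF measurable_stick_coordinate])
qed

lemma borel_measurable_stick_sum[measurable]: "stick_sum \<in> borel_measurable (stick_space P)"
  unfolding stick_sum_def stick_weight_def by measurable

lemma indep_stick_coordinates:
  "prob_space.indep_vars (stick_space P) (stick_factor P) (\<lambda>k \<omega>. \<omega> k) UNIV"
proof -
  interpret product_prob_space "stick_factor P" UNIV
    by (rule product_prob_space_stick_factor)
  have "(\<lambda>i\<in>UNIV. \<omega> i) = \<omega>" for \<omega> :: "nat \<Rightarrow> real \<times> real"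
    by auto
  then show ?thesis
    unfolding stick_space_def
    by (subst indep_vars_iff_distr_eq_PiM) (auto simp: PiM_component distr_id2)
qed

lemma AE_stick_space:
  "AE \<omega> in stick_space P. \<forall>k. fst (\<omega> k) \<in> {0<..<1} \<and> snd (\<omega> k) \<in> set_pmf P"
  unfolding AE_all_countable
proof
  fix k
  interpret B: prob_space "beta_measure (1 - \<alpha>) (\<theta> + real (Suc k) * \<alpha>)"
    using discount beta_parameter_pos by (intro prob_space_beta_measure) auto
  interpret BP: pair_prob_space "beta_measure (1 - \<alpha>) (\<theta> + real (Suc k) * \<alpha>)" "measure_pmf P" ..
  have "AE x in stick_factor P k. fst x \<in> {0<..<1} \<and> snd x \<in> set_pmf P"
    unfolding stick_factor_def
  proof (rule BP.AE_pair_measure)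
    show "{x \<in> space (beta_measure (1 - \<alpha>) (\<theta> + real (Suc k) * \<alpha>) \<Otimes>\<^sub>M measure_pmf P).
        fst x \<in> {0<..<1} \<and> snd x \<in> set_pmf P}
      \<in> sets (beta_measure (1 - \<alpha>) (\<theta> + real (Suc k) * \<alpha>) \<Otimes>\<^sub>M measure_pmf P)"
      by measurable
    show "AE x in beta_measure (1 - \<alpha>) (\<theta> + real (Suc k) * \<alpha>).
        AE y in measure_pmf P. fst (x, y) \<in> {0<..<1} \<and> snd (x, y) \<in> set_pmf P"
      using AE_beta_measure by eventually_elim (simp add: AE_measure_pmf)
  qed
  then show "AE \<omega> in stick_space P. fst (\<omega> k) \<in> {0<..<1} \<and> snd (\<omega> k) \<in> set_pmf P"
    unfolding stick_space_def by (intro AE_PiM_component prob_space_stick_factor) simp_all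
qed

lemma nn_integral_stick_remainder:
  "(\<integral>\<^sup>+\<omega>. (\<Prod>j<n. ennreal (1 - fst (\<omega> j))) \<partial>stick_space P) = (\<Prod>j<n. ennreal (stick_compl_mean j))"
proof -
  interpret prob_space "stick_space P" by (rule prob_space_stick_space)
  have marginal: "(\<integral>\<^sup>+\<omega>. ennreal (1 - fst (\<omega> j)) \<partial>stick_space P) = ennreal (stick_compl_mean j)" for j
  proof -
    have "(\<integral>\<^sup>+\<omega>. ennreal (1 - fst (\<omega> j)) \<partial>stick_space P) =
        (\<integral>\<^sup>+x. ennreal (1 - fst x) \<partial>distr (stick_space P) (stick_factor P j) (\<lambda>\<omega>. \<omega> j))"
      unfolding stick_space_def by (subst nn_integral_distr) (simp_all add: stick_factor_def)
    also have "\<dots> = (\<integral>\<^sup>+x. ennreal (1 - fst x) \<partial>stick_factor P j)"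
      unfolding stick_space_def by (simp add: distr_PiM_component prob_space_stick_factor)
    also have "\<dots> = (\<integral>\<^sup>+x. ennreal (1 - x)
        \<partial>distr (stick_factor P j) (beta_measure (1 - \<alpha>) (\<theta> + real (Suc j) * \<alpha>)) fst)"
      by (subst nn_integral_distr) (simp_all add: stick_factor_def)
    also have "\<dots> = (\<integral>\<^sup>+x. ennreal (1 - x) \<partial>beta_measure (1 - \<alpha>) (\<theta> + real (Suc j) * \<alpha>))"
      by (simp add: stick_factor_def prob_space.distr_pair_fst[OF prob_space_measure_pmf])
    also have "\<dots> = ennreal (stick_compl_mean j)"
      using discount beta_parameter_pos by (simp add: nn_integral_beta_measure_compl stick_compl_mean_def)
    finally show ?thesis .
  qed
  have "indep_vars (\<lambda>_. borel) (\<lambda>j \<omega>. ennreal (1 - fst (\<omega> j))) UNIV"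
    using indep_stick_coordinates by (rule indep_vars_compose2) (simp add: stick_factor_def)
  then have "(\<integral>\<^sup>+\<omega>. (\<Prod>j<n. ennreal (1 - fst (\<omega> j))) \<partial>stick_space P) =
      (\<Prod>j<n. \<integral>\<^sup>+\<omega>. ennreal (1 - fst (\<omega> j)) \<partial>stick_space P)"
    by (intro indep_vars_nn_integral) (auto elim: indep_vars_subset)
  then show ?thesis by (simp add: marginal)
qed

lemma stick_compl_mean_nonneg: "0 \<le> stick_compl_mean j"
  using discount beta_parameter_pos[of j] by (simp add: stick_compl_mean_def)

lemma stick_compl_mean_le: "stick_compl_mean j \<le> 1 - (1 - \<alpha>) / (1 + \<bar>\<theta>\<bar>) / real (Suc j)"
proof -
  define D where "D = 1 - \<alpha> + (\<theta> + real (Suc j) * \<alpha>)"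
  have D_pos: "0 < D"
    using discount beta_parameter_pos[of j] by (simp add: D_def)
  have "real j * \<alpha> \<le> real j * (1 + \<bar>\<theta>\<bar>)"
    using discount by (intro mult_left_mono) auto
  then have "D \<le> (1 + \<bar>\<theta>\<bar>) * real (Suc j)"
    by (simp add: D_def algebra_simps)
  then have "(1 - \<alpha>) / ((1 + \<bar>\<theta>\<bar>) * real (Suc j)) \<le> (1 - \<alpha>) / D"
    using discount D_pos by (intro divide_left_mono) auto
  moreover have "(\<theta> + real (Suc j) * \<alpha>) / D = 1 - (1 - \<alpha>) / D"
    using D_pos by (simp add: D_def field_simps)
  ultimately show ?thesis
    unfolding stick_compl_mean_def D_def[symmetric] divide_divide_eq_left by linarith
qed

lemma AE_stick_remainder_tendsto_zero:
  "AE \<omega> in stick_space P. (\<lambda>n. \<Prod>j<n. 1 - fst (\<omega> j)) \<longlonglongrightarrow> 0"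
proof -
  have "(\<lambda>n. \<Prod>j<n. stick_compl_mean j) \<longlonglongrightarrow> 0"
    using discount stick_compl_mean_le stick_compl_mean_nonneg
    by (intro prod_tendsto_zero_harmonic[where c="(1 - \<alpha>) / (1 + \<bar>\<theta>\<bar>)"]) auto
  then have "(\<lambda>n. \<integral>\<^sup>+\<omega>. (\<Prod>j<n. ennreal (1 - fst (\<omega> j))) \<partial>stick_space P) \<longlonglongrightarrow> 0"
    using tendsto_ennrealI[of "\<lambda>n. \<Prod>j<n. stick_compl_mean j" 0]
    by (simp add: nn_integral_stick_remainder prod_ennreal stick_compl_mean_nonneg)
  moreover have "AE \<omega> in stick_space P. decseq (\<lambda>n. \<Prod>j<n. ennreal (1 - fst (\<omega> j)))"
    using AE_stick_space
    by eventually_elim (auto intro!: decseq_SucI mult_left_le simp: ennreal_le_1 less_imp_le)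
  ultimately have "AE \<omega> in stick_space P. (\<lambda>n. \<Prod>j<n. ennreal (1 - fst (\<omega> j))) \<longlonglongrightarrow> 0"
    by (intro AE_tendsto_zero_decseq) auto
  with AE_stick_space show ?thesis
  proof eventually_elim
    case (elim \<omega>)
    have nonneg: "0 \<le> 1 - fst (\<omega> j)" for j
      using elim(1) by (simp add: less_imp_le)
    have "(\<Prod>j<n. ennreal (1 - fst (\<omega> j))) = ennreal (\<Prod>j<n. 1 - fst (\<omega> j))" for n
      by (rule prod_ennreal) (rule nonneg)
    with elim(2) have "(\<lambda>n. ennreal (\<Prod>j<n. 1 - fst (\<omega> j))) \<longlonglongrightarrow> ennreal 0"
      by simp
    then show ?case
      by (subst (asm) tendsto_ennreal_iff) (auto intro!: always_eventually prod_nonneg nonneg)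
  qed
qed

lemma AE_stick_weight_sums:
  "AE \<omega> in stick_space P. stick_weight (\<lambda>j. fst (\<omega> j)) sums 1"
  using AE_stick_remainder_tendsto_zero
proof eventually_elim
  case (elim \<omega>)
  then have "(\<lambda>n. 1 - (\<Prod>j<n. 1 - fst (\<omega> j))) \<longlonglongrightarrow> 1 - 0"
    by (intro tendsto_diff tendsto_const)
  then show ?case by (simp add: sums_def sum_stick_weight)
qed

lemma measurable_apsnd_stick_factor:
  "apsnd f \<in> measurable (stick_factor P k) (stick_factor Q k)"
proof -
  have "apsnd f \<in> measurable (borel \<Otimes>\<^sub>M count_space UNIV) (borel \<Otimes>\<^sub>M count_space UNIV)"
    by (simp add: apsnd_def map_prod_def split_beta' measurable_Pair measurable_compose[OF measurable_snd])
  then show ?thesis by (simp cong: measurable_cong_sets add: sets_stick_factor)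
qed

lemma distr_stick_factor_map_pmf:
  "distr (stick_factor P k) (stick_factor (map_pmf f P) k) (apsnd f) = stick_factor (map_pmf f P) k"
proof -
  let ?B = "beta_measure (1 - \<alpha>) (\<theta> + real (Suc k) * \<alpha>)"
  have "distr ?B borel (\<lambda>x. x) \<Otimes>\<^sub>M distr (measure_pmf P) (count_space UNIV) f =
      distr (?B \<Otimes>\<^sub>M measure_pmf P) (borel \<Otimes>\<^sub>M count_space UNIV) (\<lambda>(x, y). (x, f y))"
    by (intro pair_measure_distr) (simp_all flip: map_pmf_rep_eq add: prob_space_imp_sigma_finite prob_space_measure_pmf)
  moreover have "distr ?B borel (\<lambda>x. x) = ?B"
    by (intro distr_id2) simp
  ultimately show ?thesis
    unfolding stick_factor_def
    by (simp flip: map_pmf_rep_eq) (intro distr_cong; simp add: apsnd_def map_prod_def split_beta')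
qed

lemma distr_stick_space_map_pmf:
  "distr (stick_space P) (stick_space (map_pmf f P)) (\<lambda>\<omega> k. apsnd f (\<omega> k)) = stick_space (map_pmf f P)"
proof -
  interpret prob_space "stick_space P" by (rule prob_space_stick_space)
  have marginal: "distr (stick_space P) (stick_factor (map_pmf f P) k) (\<lambda>\<omega>. apsnd f (\<omega> k)) =
      stick_factor (map_pmf f P) k" for k
  proof -
    have "distr (stick_space P) (stick_factor (map_pmf f P) k) (\<lambda>\<omega>. apsnd f (\<omega> k)) =
        distr (distr (stick_space P) (stick_factor P k) (\<lambda>\<omega>. \<omega> k)) (stick_factor (map_pmf f P) k) (apsnd f)"
      by (subst distr_distr) (auto simp: comp_def intro: measurable_apsnd_stick_factor measurable_stick_component)
    also have "\<dots> = stick_factor (map_pmf f P) k"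
      unfolding stick_space_def
      by (simp add: distr_PiM_component prob_space_stick_factor distr_stick_factor_map_pmf)
    finally show ?thesis .
  qed
  have "indep_vars (stick_factor (map_pmf f P)) (\<lambda>k \<omega>. apsnd f (\<omega> k)) UNIV"
    using indep_stick_coordinates by (rule indep_vars_compose2) (rule measurable_apsnd_stick_factor)
  then have "distr (stick_space P) (stick_space (map_pmf f P)) (\<lambda>\<omega>. \<lambda>k\<in>UNIV. apsnd f (\<omega> k)) =
      (\<Pi>\<^sub>M k\<in>UNIV. distr (stick_space P) (stick_factor (map_pmf f P) k) (\<lambda>\<omega>. apsnd f (\<omega> k)))"
    unfolding stick_space_def[of "map_pmf f P"]
    by (subst (asm) indep_vars_iff_distr_eq_PiM)
       (auto intro: measurable_compose[OF measurable_stick_component measurable_apsnd_stick_factor])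
  then show ?thesis
    by (simp add: marginal restrict_def stick_space_def[of "map_pmf f P"])
qed

lemma AE_stick_sum_reflect:
  assumes "set_pmf P \<subseteq> {0..1}"
  shows "AE \<omega> in stick_space P. stick_sum (\<lambda>k. apsnd (\<lambda>z. 1 - z) (\<omega> k)) = 1 - stick_sum \<omega>"
  using AE_stick_weight_sums AE_stick_space
proof eventually_elim
  case (elim \<omega>)
  let ?W = "stick_weight (\<lambda>j. fst (\<omega> j))"
  have W_nonneg: "0 \<le> ?W k" for k
    using elim(2) unfolding stick_weight_def
    by (intro mult_nonneg_nonneg prod_nonneg) (auto simp: less_imp_le)
  have "summable (\<lambda>k. ?W k * snd (\<omega> k))"
  proof (rule summable_comparison_test'[OF sums_summable[OF elim(1)]])
    fix k
    have "\<bar>snd (\<omega> k)\<bar> \<le> 1" using elim(2)[rule_format, of k] assms by auto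
    then show "norm (?W k * snd (\<omega> k)) \<le> ?W k"
      using W_nonneg[of k] by (simp add: abs_mult mult_left_le)
  qed
  then have "(\<lambda>k. ?W k * (1 - snd (\<omega> k))) sums (1 - stick_sum \<omega>)"
    unfolding stick_sum_def using elim(1) by (simp add: right_diff_distrib sums_diff summable_sums)
  then show ?case
    by (simp add: stick_sum_def sums_iff)
qed

lemma PY_mean_law_reflect:
  assumes "set_pmf P \<subseteq> {0..1}"
  shows "PY_mean_law \<alpha> \<theta> (measure_pmf (map_pmf (\<lambda>z. 1 - z) P)) =
    distr (PY_mean_law \<alpha> \<theta> (measure_pmf P)) borel (\<lambda>m. 1 - m)"
proof -
  let ?reflect = "\<lambda>\<omega> k. apsnd (\<lambda>z. 1 - z) (\<omega> k)"
  have reflect: "?reflect \<in> measurable (stick_space P) (stick_space (map_pmf (\<lambda>z. 1 - z) P))"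
    unfolding stick_space_def[of "map_pmf (\<lambda>z. 1 - z) P"]
    by (intro measurable_PiM_single' measurable_compose[OF measurable_stick_component
        measurable_apsnd_stick_factor]) (auto simp: space_PiM)
  have "PY_mean_law \<alpha> \<theta> (measure_pmf (map_pmf (\<lambda>z. 1 - z) P)) =
      distr (distr (stick_space P) (stick_space (map_pmf (\<lambda>z. 1 - z) P)) ?reflect) borel stick_sum"
    by (simp add: PY_mean_law_pmf distr_stick_space_map_pmf)
  also have "\<dots> = distr (stick_space P) borel (\<lambda>\<omega>. stick_sum (?reflect \<omega>))"
    using reflect by (subst distr_distr) (auto simp: comp_def)
  also have "\<dots> = distr (stick_space P) borel (\<lambda>\<omega>. 1 - stick_sum \<omega>)"
    using reflect assms
    by (intro distr_cong_AE AE_stick_sum_reflect) (auto intro: measurable_compose[OF reflect])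
  also have "\<dots> = distr (PY_mean_law \<alpha> \<theta> (measure_pmf P)) borel (\<lambda>m. 1 - m)"
    by (simp add: PY_mean_law_pmf distr_distr comp_def)
  finally show ?thesis .
qed

lemma prob_space_PY_mean_law: "prob_space (PY_mean_law \<alpha> \<theta> (measure_pmf P))"
  unfolding PY_mean_law_pmf
  by (intro prob_space.prob_space_distr prob_space_stick_space borel_measurable_stick_sum)

lemma PY_mean_law_bern_compl:
  assumes "0 \<le> q" "q \<le> 1"
  shows "PY_mean_law \<alpha> \<theta> (bern (1 - q)) = distr (PY_mean_law \<alpha> \<theta> (bern q)) borel (\<lambda>m. 1 - m)"
  using PY_mean_law_reflect[OF set_bern_pmf[of q]] assms
  by (simp add: bern_eq_bern_pmf map_bern_pmf_compl)

lemma prob_space_PY_mean_law_bern: "prob_space (PY_mean_law \<alpha> \<theta> (bern q))"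
  by (simp add: bern_eq_bern_pmf prob_space_PY_mean_law)

end

section \<open>Conditioning on the Bernoulli coordinate\<close>

lemma borel_measurable_pair_bern_snd[measurable]:
  "(\<lambda>x. snd (snd x)) \<in> borel_measurable (B \<Otimes>\<^sub>M (M \<Otimes>\<^sub>M bern q))"
  by (intro measurable_compose[OF measurable_snd] measurable_compose[OF measurable_snd]) simp

lemma nn_integral_pair_bern:
  fixes h :: "real \<times> real \<times> real \<Rightarrow> ennreal"
  assumes M: "sigma_finite_measure M" and q: "0 \<le> q" "q \<le> 1"
    and h[measurable]: "h \<in> borel_measurable (B \<Otimes>\<^sub>M (M \<Otimes>\<^sub>M bern q))"
  shows "(\<integral>\<^sup>+x. h x \<partial>(B \<Otimes>\<^sub>M (M \<Otimes>\<^sub>M bern q))) =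
     ennreal q * (\<integral>\<^sup>+x. h (fst x, snd x, 1) \<partial>(B \<Otimes>\<^sub>M M)) +
     ennreal (1 - q) * (\<integral>\<^sup>+x. h (fst x, snd x, 0) \<partial>(B \<Otimes>\<^sub>M M))"
proof -
  interpret M: sigma_finite_measure M by (rule M)
  interpret N: prob_space "bern q" by (rule prob_space_bern)
  interpret MN: pair_sigma_finite M "bern q" ..
  have MN: "sigma_finite_measure (M \<Otimes>\<^sub>M bern q)"
    by (rule sigma_finite_pair_measure) unfold_locales
  have "(\<integral>\<^sup>+x. h x \<partial>(B \<Otimes>\<^sub>M (M \<Otimes>\<^sub>M bern q))) = (\<integral>\<^sup>+b. \<integral>\<^sup>+y. h (b, y) \<partial>(M \<Otimes>\<^sub>M bern q) \<partial>B)"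
    by (rule sigma_finite_measure.nn_integral_fst[OF MN h, symmetric])
  also have "\<dots> = (\<integral>\<^sup>+b. \<integral>\<^sup>+m. ennreal q * h (b, m, 1) + ennreal (1 - q) * h (b, m, 0) \<partial>M \<partial>B)"
    using q by (intro nn_integral_cong) (simp add: N.nn_integral_fst[symmetric] nn_integral_bern)
  also have "\<dots> = (\<integral>\<^sup>+x. ennreal q * h (fst x, snd x, 1) + ennreal (1 - q) * h (fst x, snd x, 0) \<partial>(B \<Otimes>\<^sub>M M))"
    by (subst M.nn_integral_fst[symmetric]) auto
  also have "\<dots> = ennreal q * (\<integral>\<^sup>+x. h (fst x, snd x, 1) \<partial>(B \<Otimes>\<^sub>M M)) +
     ennreal (1 - q) * (\<integral>\<^sup>+x. h (fst x, snd x, 0) \<partial>(B \<Otimes>\<^sub>M M))"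
    by (simp add: nn_integral_add nn_integral_cmult)
  finally show ?thesis .
qed

lemma emeasure_pair_bern:
  fixes B M :: "real measure" and q :: real and Y :: "real \<times> real \<times> real \<Rightarrow> real"
  defines "Q \<equiv> B \<Otimes>\<^sub>M (M \<Otimes>\<^sub>M bern q)"
  assumes M: "sigma_finite_measure M" and q: "0 \<le> q" "q \<le> 1"
    and [measurable]: "Y \<in> borel_measurable Q" "A \<in> sets borel"
  shows "emeasure Q {x \<in> space Q. Y x \<in> A \<and> snd (snd x) = 1} =
      ennreal q * emeasure (distr (B \<Otimes>\<^sub>M M) borel (\<lambda>(b, m). Y (b, m, 1))) A"
    and "emeasure Q {x \<in> space Q. Y x \<in> A \<and> snd (snd x) = 0} =
      ennreal (1 - q) * emeasure (distr (B \<Otimes>\<^sub>M M) borel (\<lambda>(b, m). Y (b, m, 0))) A"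
    and "emeasure (distr Q borel Y) A =
      ennreal q * emeasure (distr (B \<Otimes>\<^sub>M M) borel (\<lambda>(b, m). Y (b, m, 1))) A +
      ennreal (1 - q) * emeasure (distr (B \<Otimes>\<^sub>M M) borel (\<lambda>(b, m). Y (b, m, 0))) A"
proof -
  have [measurable]: "Y \<in> borel_measurable (B \<Otimes>\<^sub>M (M \<Otimes>\<^sub>M bern q))"
    using assms(5) by (simp add: Q_def)
  have fibre: "emeasure (distr (B \<Otimes>\<^sub>M M) borel (\<lambda>(b, m). Y (b, m, w))) A =
      (\<integral>\<^sup>+x. indicator A (Y (fst x, snd x, w)) \<partial>(B \<Otimes>\<^sub>M M))" for w
    by (simp add: nn_integral_distr split_beta' flip: nn_integral_indicator)
  have integral: "(\<integral>\<^sup>+x. indicator A (Y x) * indicator C (snd (snd x)) \<partial>Q) =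
      ennreal q * indicator C 1 * emeasure (distr (B \<Otimes>\<^sub>M M) borel (\<lambda>(b, m). Y (b, m, 1))) A +
      ennreal (1 - q) * indicator C 0 * emeasure (distr (B \<Otimes>\<^sub>M M) borel (\<lambda>(b, m). Y (b, m, 0))) A"
    if [measurable]: "C \<in> sets borel" for C
    unfolding Q_def fibre using M q
    by (subst nn_integral_pair_bern) (simp_all add: nn_integral_cmult mult_ac)
  have fibre_integral: "emeasure Q {x \<in> space Q. Y x \<in> A \<and> snd (snd x) = w} =
      (\<integral>\<^sup>+x. indicator A (Y x) * indicator {w} (snd (snd x)) \<partial>Q)" for w :: real
  proof -
    have "{x \<in> space Q. Y x \<in> A \<and> snd (snd x) = w} \<in> sets Q"
      unfolding Q_def by measurable
    then have "emeasure Q {x \<in> space Q. Y x \<in> A \<and> snd (snd x) = w} =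
        (\<integral>\<^sup>+x. indicator {x \<in> space Q. Y x \<in> A \<and> snd (snd x) = w} x \<partial>Q)"
      by simp
    also have "\<dots> = (\<integral>\<^sup>+x. indicator A (Y x) * indicator {w} (snd (snd x)) \<partial>Q)"
      by (intro nn_integral_cong) (auto simp: indicator_def)
    finally show ?thesis .
  qed
  then show "emeasure Q {x \<in> space Q. Y x \<in> A \<and> snd (snd x) = 1} =
      ennreal q * emeasure (distr (B \<Otimes>\<^sub>M M) borel (\<lambda>(b, m). Y (b, m, 1))) A"
    and "emeasure Q {x \<in> space Q. Y x \<in> A \<and> snd (snd x) = 0} =
      ennreal (1 - q) * emeasure (distr (B \<Otimes>\<^sub>M M) borel (\<lambda>(b, m). Y (b, m, 0))) A"
    by (simp_all add: integral)
  have "emeasure (distr Q borel Y) A = (\<integral>\<^sup>+x. indicator A (Y x) * indicator UNIV (snd (snd x)) \<partial>Q)"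
    by (simp add: nn_integral_distr flip: nn_integral_indicator)
  also have "\<dots> = ennreal q * emeasure (distr (B \<Otimes>\<^sub>M M) borel (\<lambda>(b, m). Y (b, m, 1))) A +
      ennreal (1 - q) * emeasure (distr (B \<Otimes>\<^sub>M M) borel (\<lambda>(b, m). Y (b, m, 0))) A"
    using integral[of UNIV] by simp
  finally show "emeasure (distr Q borel Y) A =
      ennreal q * emeasure (distr (B \<Otimes>\<^sub>M M) borel (\<lambda>(b, m). Y (b, m, 1))) A +
      ennreal (1 - q) * emeasure (distr (B \<Otimes>\<^sub>M M) borel (\<lambda>(b, m). Y (b, m, 0))) A" .
qed

lemma measure_pair_bern_cond:
  fixes B M :: "real measure" and q :: real and Y :: "real \<times> real \<times> real \<Rightarrow> real"
  defines "Q \<equiv> B \<Otimes>\<^sub>M (M \<Otimes>\<^sub>M bern q)"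
  assumes "prob_space B" "prob_space M" "0 < q" "q < 1"
    and Y[measurable]: "Y \<in> borel_measurable Q" and A: "A \<in> sets borel"
  shows "measure Q {x \<in> space Q. Y x \<in> A \<and> snd (snd x) = 1} / measure Q {x \<in> space Q. snd (snd x) = 1}
      = measure (distr (B \<Otimes>\<^sub>M M) borel (\<lambda>(b, m). Y (b, m, 1))) A"
    and "measure Q {x \<in> space Q. Y x \<in> A \<and> snd (snd x) = 0} / measure Q {x \<in> space Q. snd (snd x) = 0}
      = measure (distr (B \<Otimes>\<^sub>M M) borel (\<lambda>(b, m). Y (b, m, 0))) A"
proof -
  interpret pair_prob_space B M
    using assms(2,3) by (simp add: pair_prob_space_def pair_sigma_finite_def prob_space_imp_sigma_finite)
  have [measurable]: "Y \<in> borel_measurable (B \<Otimes>\<^sub>M (M \<Otimes>\<^sub>M bern q))"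
    using Y by (simp add: Q_def)
  have total: "emeasure (distr (B \<Otimes>\<^sub>M M) borel (\<lambda>(b, m). Y (b, m, w))) UNIV = 1" for w
    using prob_space.emeasure_space_1[OF prob_space_distr, of "\<lambda>(b, m). Y (b, m, w)" borel] by simp
  have M: "sigma_finite_measure M"
    using assms(3) by (rule prob_space_imp_sigma_finite)
  note fibre = emeasure_pair_bern[of M q Y B, OF M _ _ Y[unfolded Q_def], folded Q_def]
  have "emeasure Q {x \<in> space Q. snd (snd x) = 1} = ennreal q"
    "emeasure Q {x \<in> space Q. snd (snd x) = 0} = ennreal (1 - q)"
    using fibre(1,2)[of UNIV] assms(4,5) by (simp_all add: total)
  then show "measure Q {x \<in> space Q. Y x \<in> A \<and> snd (snd x) = 1} / measure Q {x \<in> space Q. snd (snd x) = 1}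
      = measure (distr (B \<Otimes>\<^sub>M M) borel (\<lambda>(b, m). Y (b, m, 1))) A"
    and "measure Q {x \<in> space Q. Y x \<in> A \<and> snd (snd x) = 0} / measure Q {x \<in> space Q. snd (snd x) = 0}
      = measure (distr (B \<Otimes>\<^sub>M M) borel (\<lambda>(b, m). Y (b, m, 0))) A"
    unfolding measure_def using assms(4,5) A by (simp_all add: fibre enn2real_mult)
qed

section \<open>Densities of products with a Beta variable\<close>

lemma distr_mult_density:
  fixes f :: "real \<Rightarrow> ennreal"
  assumes B: "sigma_finite_measure B" "sets B = sets borel" "AE u in B. 0 < u"
    and f: "f \<in> borel_measurable borel" "sigma_finite_measure (density lborel f)"
  shows "distr (B \<Otimes>\<^sub>M density lborel f) borel (\<lambda>(u, m). u * m) =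
    density lborel (\<lambda>t. \<integral>\<^sup>+u. ennreal (1 / u) * f (t / u) \<partial>B)"
proof (rule measure_eqI)
  interpret B: sigma_finite_measure B by (rule B(1))
  interpret D: sigma_finite_measure "density lborel f" by (rule f(2))
  interpret BL: pair_sigma_finite B lborel ..
  note [measurable] = f(1) and [measurable_cong] = B(2)
  fix A :: "real set" assume "A \<in> sets (distr (B \<Otimes>\<^sub>M density lborel f) borel (\<lambda>(u, m). u * m))"
  then have [measurable]: "A \<in> sets borel" by simp
  have scale: "(\<integral>\<^sup>+m. f m * indicator A (u * m) \<partial>lborel) =
      (\<integral>\<^sup>+t. ennreal (1 / u) * f (t / u) * indicator A t \<partial>lborel)" if "0 < u" for u
    using that nn_integral_real_affine[of "\<lambda>m. f m * indicator A (u * m)" "1 / u" 0]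
    by (simp add: nn_integral_cmult[symmetric] mult.assoc)
  have "emeasure (distr (B \<Otimes>\<^sub>M density lborel f) borel (\<lambda>(u, m). u * m)) A =
      (\<integral>\<^sup>+x. indicator A (fst x * snd x) \<partial>(B \<Otimes>\<^sub>M density lborel f))"
    by (simp add: nn_integral_distr split_beta' flip: nn_integral_indicator)
  also have "\<dots> = (\<integral>\<^sup>+u. \<integral>\<^sup>+m. f m * indicator A (u * m) \<partial>lborel \<partial>B)"
    by (simp add: D.nn_integral_fst[symmetric] nn_integral_density)
  also have "\<dots> = (\<integral>\<^sup>+u. \<integral>\<^sup>+t. ennreal (1 / u) * f (t / u) * indicator A t \<partial>lborel \<partial>B)"
    using B(3) by (intro nn_integral_cong_AE) (auto elim!: eventually_mono simp: scale)
  also have "\<dots> = (\<integral>\<^sup>+t. \<integral>\<^sup>+u. ennreal (1 / u) * f (t / u) * indicator A t \<partial>B \<partial>lborel)"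
    by (rule BL.Fubini'[symmetric]) measurable
  also have "\<dots> = (\<integral>\<^sup>+t. (\<integral>\<^sup>+u. ennreal (1 / u) * f (t / u) \<partial>B) * indicator A t \<partial>lborel)"
    by (simp add: nn_integral_multc)
  also have "\<dots> = emeasure (density lborel (\<lambda>t. \<integral>\<^sup>+u. ennreal (1 / u) * f (t / u) \<partial>B)) A"
    by (simp add: emeasure_density B.borel_measurable_nn_integral)
  finally show "emeasure (distr (B \<Otimes>\<^sub>M density lborel f) borel (\<lambda>(u, m). u * m)) A =
      emeasure (density lborel (\<lambda>t. \<integral>\<^sup>+u. ennreal (1 / u) * f (t / u) \<partial>B)) A" .
qed simp

lemma distr_reflect_density:
  fixes g :: "real \<Rightarrow> ennreal"
  assumes [measurable]: "g \<in> borel_measurable borel"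
  shows "distr (density lborel g) borel (\<lambda>t. 1 - t) = density lborel (\<lambda>t. g (1 - t))"
proof (rule measure_eqI)
  fix A :: "real set" assume "A \<in> sets (distr (density lborel g) borel (\<lambda>t. 1 - t))"
  then have [measurable]: "A \<in> sets borel" by simp
  have "emeasure (distr (density lborel g) borel (\<lambda>t. 1 - t)) A = (\<integral>\<^sup>+t. g t * indicator A (1 - t) \<partial>lborel)"
    by (simp add: emeasure_distr emeasure_density indicator_def vimage_def Int_def)
  also have "\<dots> = (\<integral>\<^sup>+t. g (1 - t) * indicator A t \<partial>lborel)"
    using nn_integral_real_affine[of "\<lambda>t. g t * indicator A (1 - t)" "- 1" 1] by simp
  finally show "emeasure (distr (density lborel g) borel (\<lambda>t. 1 - t)) A =
      emeasure (density lborel (\<lambda>t. g (1 - t))) A"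
    by (simp add: emeasure_density)
qed simp

lemma distr_pair_reflect:
  fixes B M :: "real measure"
  assumes "sets B = sets borel" "sets M = sets borel" "prob_space M"
  shows "distr (B \<Otimes>\<^sub>M distr M borel (\<lambda>m. 1 - m)) borel (\<lambda>(b, m). 1 - b * m) =
    distr (B \<Otimes>\<^sub>M M) borel (\<lambda>(b, m). b * m + (1 - b))"
proof -
  note [measurable_cong] = assms(1,2)
  have "distr B borel (\<lambda>b. b) \<Otimes>\<^sub>M distr M borel (\<lambda>m. 1 - m) =
      distr (B \<Otimes>\<^sub>M M) (borel \<Otimes>\<^sub>M borel) (\<lambda>(b, m). (b, 1 - m))"
  proof (intro pair_measure_distr prob_space_imp_sigma_finite prob_space.prob_space_distr)
    show "(\<lambda>m. 1 - m) \<in> borel_measurable M"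
      by (subst measurable_cong_sets[OF assms(2) refl]) simp
  qed (simp_all add: assms)
  moreover have "distr B borel (\<lambda>b. b) = B"
    by (intro distr_id2) (simp add: assms)
  ultimately show ?thesis
    by (simp add: distr_distr comp_def split_beta' algebra_simps)
qed

lemma nn_integral_beta_1_mixture:
  fixes f1 f2 :: "real \<Rightarrow> real"
  assumes "0 < \<beta>" "0 \<le> q" "q \<le> 1"
    and [measurable]: "f1 \<in> borel_measurable borel" "f2 \<in> borel_measurable borel"
    and nonneg: "\<And>x. 0 \<le> f1 x" "\<And>x. 0 \<le> f2 x"
  shows "ennreal q * (\<integral>\<^sup>+u. ennreal (1 / u) * ennreal (f2 ((1 - t) / u)) \<partial>beta_measure 1 \<beta>) +
      ennreal (1 - q) * (\<integral>\<^sup>+u. ennreal (1 / u) * ennreal (f1 (t / u)) \<partial>beta_measure 1 \<beta>) =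
    ennreal \<beta> * (\<integral>\<^sup>+u. indicator {0<..<1} u *
      ennreal (((1 - q) * f1 (t / u) + q * f2 ((1 - t) / u)) * (1 / u) * (1 - u) powr (\<beta> - 1)) \<partial>lborel)"
proof -
  have pointwise: "ennreal q * (beta_density 1 \<beta> u * (ennreal (1 / u) * ennreal (f2 ((1 - t) / u)))) +
      ennreal (1 - q) * (beta_density 1 \<beta> u * (ennreal (1 / u) * ennreal (f1 (t / u)))) =
    ennreal \<beta> * (indicator {0<..<1} u *
      ennreal (((1 - q) * f1 (t / u) + q * f2 ((1 - t) / u)) * (1 / u) * (1 - u) powr (\<beta> - 1)))" for u
  proof (cases "u \<in> {0<..<1}")
    case True
    define K where "K = \<beta> * (1 - u) powr (\<beta> - 1) * (1 / u)"
    have K: "0 \<le> K" using True assms(1) by (simp add: K_def)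
    have density: "beta_density 1 \<beta> u * (ennreal (1 / u) * ennreal x) = ennreal (K * x)" if "0 \<le> x" for x
      using True assms(1) that by (simp add: beta_density_1_left K_def mult_ac flip: ennreal_mult')
    have "\<beta> * (((1 - q) * f1 (t / u) + q * f2 ((1 - t) / u)) * (1 / u) * (1 - u) powr (\<beta> - 1)) =
        q * (K * f2 ((1 - t) / u)) + (1 - q) * (K * f1 (t / u))"
      using True by (simp add: K_def field_simps)
    then have "ennreal \<beta> * ennreal (((1 - q) * f1 (t / u) + q * f2 ((1 - t) / u)) * (1 / u) * (1 - u) powr (\<beta> - 1)) =
        ennreal (q * (K * f2 ((1 - t) / u)) + (1 - q) * (K * f1 (t / u)))"
      using assms(1) by (simp flip: ennreal_mult')
    also have "\<dots> = ennreal q * ennreal (K * f2 ((1 - t) / u)) + ennreal (1 - q) * ennreal (K * f1 (t / u))"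
      using assms(2,3) K nonneg by (simp add: ennreal_mult')
    finally show ?thesis
      using True nonneg by (simp add: density)
  qed (simp add: beta_density_1_left assms(1))
  show ?thesis
    unfolding beta_measure_def using assms(1-3)
    by (simp add: nn_integral_density nn_integral_cmult[symmetric] nn_integral_add[symmetric]
        pointwise del: ennreal_plus)
qed

lemma distr_beta_pair_bern_density:
  fixes M :: "real measure" and f1 f2 :: "real \<Rightarrow> real"
  assumes \<beta>: "0 < \<beta>" and q: "0 \<le> q" "q \<le> 1" and M: "prob_space M"
    and f_meas[measurable]: "f1 \<in> borel_measurable borel" "f2 \<in> borel_measurable borel"
    and nonneg: "\<And>x. 0 \<le> f1 x" "\<And>x. 0 \<le> f2 x"
    and f1: "M = density lborel (\<lambda>x. ennreal (f1 x))"
    and f2: "distr M borel (\<lambda>m. 1 - m) = density lborel (\<lambda>x. ennreal (f2 x))"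
  shows "distr (beta_measure 1 \<beta> \<Otimes>\<^sub>M (M \<Otimes>\<^sub>M bern q)) borel (\<lambda>(b, m, w). b * m + (1 - b) * w) =
    density lborel (\<lambda>t. ennreal \<beta> * (\<integral>\<^sup>+u. indicator {0<..<1} u *
      ennreal (((1 - q) * f1 (t / u) + q * f2 ((1 - t) / u)) * (1 / u) * (1 - u) powr (\<beta> - 1)) \<partial>lborel))"
    (is "?law = density lborel ?h")
proof -
  let ?B = "beta_measure 1 \<beta>"
  define g where "g f t = (\<integral>\<^sup>+u. ennreal (1 / u) * ennreal (f (t / u)) \<partial>?B)" for f :: "real \<Rightarrow> real" and t
  interpret B: prob_space ?B using \<beta> by (intro prob_space_beta_measure) auto
  have sets_M[measurable_cong]: "sets M = sets borel"
    by (simp add: f1)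
  have g[measurable]: "g f \<in> borel_measurable borel" if [measurable]: "f \<in> borel_measurable borel" for f
    unfolding g_def by measurable
  have product_law: "distr (?B \<Otimes>\<^sub>M density lborel (\<lambda>x. ennreal (f x))) borel (\<lambda>(u, m). u * m) =
      density lborel (g f)"
    if "f \<in> borel_measurable borel" "prob_space (density lborel (\<lambda>x. ennreal (f x)))" for f
    unfolding g_def using that AE_beta_measure[of 1 \<beta>]
    by (intro distr_mult_density prob_space_imp_sigma_finite B.prob_space_axioms)
       (auto elim: eventually_mono)
  have Y: "(\<lambda>(b, m, w). b * m + (1 - b) * w) \<in> borel_measurable (?B \<Otimes>\<^sub>M (M \<Otimes>\<^sub>M bern q))"
    unfolding split_beta' by measurable
  have law0: "distr (?B \<Otimes>\<^sub>M M) borel (\<lambda>(b, m). b * m) = density lborel (g f1)"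
    using M by (simp add: f1 product_law)
  have "distr (?B \<Otimes>\<^sub>M M) borel (\<lambda>(b, m). b * m + (1 - b)) =
      distr (?B \<Otimes>\<^sub>M distr M borel (\<lambda>m. 1 - m)) borel (\<lambda>(b, m). 1 - b * m)"
    using M by (simp add: distr_pair_reflect sets_M)
  also have "\<dots> = distr (distr (?B \<Otimes>\<^sub>M distr M borel (\<lambda>m. 1 - m)) borel (\<lambda>(b, m). b * m)) borel (\<lambda>t. 1 - t)"
    by (simp add: distr_distr comp_def split_beta')
  also have "\<dots> = density lborel (\<lambda>t. g f2 (1 - t))"
  proof -
    have M2: "prob_space (density lborel (\<lambda>x. ennreal (f2 x)))"
      unfolding f2[symmetric] using M by (intro prob_space.prob_space_distr) simp_all
    show ?thesis
      unfolding f2 product_law[OF f_meas(2) M2] by (intro distr_reflect_density g f_meas)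
  qed
  finally have law1: "distr (?B \<Otimes>\<^sub>M M) borel (\<lambda>(b, m). b * m + (1 - b)) = density lborel (\<lambda>t. g f2 (1 - t))" .
  show ?thesis
  proof (rule measure_eqI)
    fix A :: "real set" assume "A \<in> sets ?law"
    then have [measurable]: "A \<in> sets borel" by simp
    have "emeasure ?law A = ennreal q * emeasure (density lborel (\<lambda>t. g f2 (1 - t))) A +
        ennreal (1 - q) * emeasure (density lborel (g f1)) A"
      using emeasure_pair_bern(3)[OF prob_space_imp_sigma_finite[OF M] q Y] by (simp add: law0 law1)
    also have "\<dots> = (\<integral>\<^sup>+t. (ennreal q * g f2 (1 - t) + ennreal (1 - q) * g f1 t) * indicator A t \<partial>lborel)"
      by (simp add: emeasure_density nn_integral_add nn_integral_cmult distrib_right mult.assoc)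
    also have "\<dots> = emeasure (density lborel ?h) A"
      using \<beta> q nonneg by (simp add: emeasure_density g_def nn_integral_beta_1_mixture)
    finally show "emeasure ?law A = emeasure (density lborel ?h) A" .
  qed simp
qed

theorem corollary6p1:
  fixes \<alpha> p :: real and f1 f2 :: "real \<Rightarrow> real"
  assumes "0 < \<alpha>" "\<alpha> < 1" "0 < p" "p < 1"
    and ident: "PY_mean_law \<alpha> (1 - \<alpha>) (bern p) =
       distr (beta_measure 1 (1 - \<alpha>) \<Otimes>\<^sub>M (PY_mean_law \<alpha> 1 (bern p) \<Otimes>\<^sub>M bern p)) borel
             (\<lambda>(b, m, w). b * m + (1 - b) * w)"
    and f1_meas: "f1 \<in> borel_measurable borel"
    and f1_nonneg: "\<And>x. 0 \<le> f1 x"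
    and f1_supp: "\<And>x. x \<notin> {0<..<1} \<Longrightarrow> f1 x = 0"
    and f1_dens: "PY_mean_law \<alpha> 1 (bern p) = density lborel (\<lambda>x. ennreal (f1 x))"
    and f2_meas: "f2 \<in> borel_measurable borel"
    and f2_nonneg: "\<And>x. 0 \<le> f2 x"
    and f2_supp: "\<And>x. x \<notin> {0<..<1} \<Longrightarrow> f2 x = 0"
    and f2_dens: "PY_mean_law \<alpha> 1 (bern (1 - p)) = density lborel (\<lambda>x. ennreal (f2 x))"
  shows
    "(let Q = beta_measure 1 (1 - \<alpha>) \<Otimes>\<^sub>M (PY_mean_law \<alpha> 1 (bern p) \<Otimes>\<^sub>M bern p);
          Y = (\<lambda>(b, m, w). b * m + (1 - b) * w);
          W = (\<lambda>(b::real, m::real, w::real). w)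
      in (\<forall>A \<in> sets borel.
            measure Q {x \<in> space Q. Y x \<in> A \<and> W x = 1} / measure Q {x \<in> space Q. W x = 1}
            = measure (distr (beta_measure 1 (1 - \<alpha>) \<Otimes>\<^sub>M PY_mean_law \<alpha> 1 (bern (1 - p))) borel
                         (\<lambda>(b, m). 1 - b * m)) A)
       \<and> (\<forall>A \<in> sets borel.
            measure Q {x \<in> space Q. Y x \<in> A \<and> W x = 0} / measure Q {x \<in> space Q. W x = 0}
            = measure (distr (beta_measure 1 (1 - \<alpha>) \<Otimes>\<^sub>M PY_mean_law \<alpha> 1 (bern p)) borel
                         (\<lambda>(b, m). b * m)) A))
     \<and> PY_mean_law \<alpha> (1 - \<alpha>) (bern p) =
        density lborel (\<lambda>t. ennreal (1 - \<alpha>) *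
          (\<integral>\<^sup>+ u. indicator {0<..<1} u *
              ennreal (((1 - p) * f1 (t / u) + p * f2 ((1 - t) / u)) * (1 / u) * (1 - u) powr (- \<alpha>))
           \<partial>lborel))"
proof -
  interpret stick_breaking \<alpha> 1
    using assms(1,2) by unfold_locales auto
  let ?B = "beta_measure 1 (1 - \<alpha>)"
  let ?M1 = "PY_mean_law \<alpha> 1 (bern p)" and ?M2 = "PY_mean_law \<alpha> 1 (bern (1 - p))"
  have B: "prob_space ?B"
    using assms(2) by (intro prob_space_beta_measure) auto
  have Y: "(\<lambda>(b, m, w). b * m + (1 - b) * w) \<in> borel_measurable (?B \<Otimes>\<^sub>M (?M1 \<Otimes>\<^sub>M bern p))"
    unfolding split_beta' by measurable
  have reflect: "?M2 = distr ?M1 borel (\<lambda>m. 1 - m)"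
    using assms(3,4) by (intro PY_mean_law_bern_compl) auto
  have reflected_law: "distr (?B \<Otimes>\<^sub>M ?M1) borel (\<lambda>(b, m). b * m + (1 - b)) =
      distr (?B \<Otimes>\<^sub>M ?M2) borel (\<lambda>(b, m). 1 - b * m)"
    unfolding reflect by (intro distr_pair_reflect[symmetric] prob_space_PY_mean_law_bern) simp_all
  note cond = measure_pair_bern_cond[OF B prob_space_PY_mean_law_bern assms(3,4) Y]
  have density: "distr (?B \<Otimes>\<^sub>M (?M1 \<Otimes>\<^sub>M bern p)) borel (\<lambda>(b, m, w). b * m + (1 - b) * w) =
      density lborel (\<lambda>t. ennreal (1 - \<alpha>) * (\<integral>\<^sup>+u. indicator {0<..<1} u *
        ennreal (((1 - p) * f1 (t / u) + p * f2 ((1 - t) / u)) * (1 / u) * (1 - u) powr ((1 - \<alpha>) - 1)) \<partial>lborel))"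
    using assms(2-4) f2_dens
    by (intro distr_beta_pair_bern_density prob_space_PY_mean_law_bern f1_meas f2_meas f1_nonneg f2_nonneg f1_dens)
       (simp_all flip: reflect)
  show ?thesis
    unfolding Let_def using cond reflected_law density ident by (simp add: split_beta')
qed

end
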